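(* Let $a<b$ be real numbers and let $f:[a,b]\to\mathbb{R}$ be continuous on $[a,b]$ and differentiable on $(a,b)$. If $c,\xi_c$ satisfy $a<\xi_c<c<b$ and $f'(\xi_c)=\frac{f(c)-f(a)}{c-a}$, then there exists $\xi_b\in[\xi_c,b)$ such that $f'(\xi_b)=\frac{f(b)-f(a)}{b-a}$. *)

theory Defs
  imports "HOL-Analysis.Analysis"
begin

end

theory Submission
  imports Defs
begin

text \<open>
  Subtract the secant through \<open>(a, f a)\<close> and \<open>(b, f b)\<close>: the function \<open>g\<close> so obtained
  vanishes at \<open>b\<close>, and the hypothesis on \<open>\<xi>c\<close> says that \<open>g' \<xi>c\<close> has the sign of
  \<open>g c - g b = g c\<close>. If \<open>g' \<xi>c = 0\<close> we take \<open>\<xi>b = \<xi>c\<close>. Otherwise, say \<open>g' \<xi>c > 0\<close>,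
  the maximum of \<open>g\<close> on \<open>[\<xi>c, b]\<close> is attained neither at \<open>\<xi>c\<close> (where \<open>g\<close> is increasing)
  nor at \<open>b\<close> (since \<open>g c > g b\<close>), so by Fermat's theorem \<open>g'\<close> vanishes at an interior point.
\<close>

lemma DERIV_zero_at_interior_max:
  fixes g g' :: "real \<Rightarrow> real"
  assumes cont: "continuous_on {p..b} g"
    and deriv: "\<And>x. x \<in> {p..<b} \<Longrightarrow> (g has_real_derivative g' x) (at x)"
    and increasing_at_p: "0 < g' p"
    and c: "c \<in> {p..b}" and above_b: "g b < g c"
  shows "\<exists>x\<in>{p<..<b}. g' x = 0"
proof -
  have "p < b" using c above_b by (cases "c = b") auto
  obtain x0 where x0: "x0 \<in> {p..b}" and max: "\<And>y. y \<in> {p..b} \<Longrightarrow> g y \<le> g x0"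
    using continuous_attains_sup[of "{p..b}" g] cont \<open>p < b\<close> by force
  have "x0 \<noteq> b" using max[OF c] above_b by auto
  moreover have "x0 \<noteq> p"
  proof
    assume "x0 = p"
    obtain d where "d > 0" and rising: "\<And>h. 0 < h \<Longrightarrow> h < d \<Longrightarrow> g p < g (p + h)"
      using DERIV_pos_inc_right[OF deriv increasing_at_p] \<open>p < b\<close> by force
    define h where "h = min (d / 2) (b - p)"
    have "g p < g (p + h)" using rising \<open>d > 0\<close> \<open>p < b\<close> by (simp add: h_def)
    moreover have "p + h \<in> {p..b}" using \<open>d > 0\<close> \<open>p < b\<close> by (simp add: h_def)
    ultimately show False using max \<open>x0 = p\<close> by fastforce
  qed
  ultimately have interior: "x0 \<in> {p<..<b}" using x0 by auto
  have "g' x0 = 0"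
  proof (rule DERIV_local_max[OF deriv])
    show "\<forall>y. \<bar>x0 - y\<bar> < min (x0 - p) (b - x0) \<longrightarrow> g y \<le> g x0"
      by (auto intro!: max simp: abs_less_iff)
  qed (use interior in auto)
  with interior show ?thesis by blast
qed

lemma DERIV_zero_between:
  fixes g g' :: "real \<Rightarrow> real"
  assumes cont: "continuous_on {p..b} g"
    and deriv: "\<And>x. x \<in> {p..<b} \<Longrightarrow> (g has_real_derivative g' x) (at x)"
    and c: "c \<in> {p..b}" and sign: "0 < g' p * (g c - g b)"
  shows "\<exists>x\<in>{p<..<b}. g' x = 0"
proof (cases "0 < g' p")
  case True
  with sign have "g b < g c" by (simp add: zero_less_mult_iff)
  then show ?thesis using DERIV_zero_at_interior_max[of p b g g' c] cont deriv True c by blast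
next
  case False
  with sign have "0 < - g' p" "- g b < - g c" by (auto simp: zero_less_mult_iff)
  moreover have "continuous_on {p..b} (\<lambda>x. - g x)" using cont by (intro continuous_intros)
  moreover have "((\<lambda>x. - g x) has_real_derivative - g' x) (at x)" if "x \<in> {p..<b}" for x
    using DERIV_minus[OF deriv[OF that]] .
  ultimately have "\<exists>x\<in>{p<..<b}. - g' x = 0"
    using DERIV_zero_at_interior_max[of p b "\<lambda>x. - g x" "\<lambda>x. - g' x" c] c by blast
  then show ?thesis by auto
qed

theorem theorem6:
  fixes f f' :: "real \<Rightarrow> real" and a b c \<xi>c :: real
  assumes "a < b"
    and "continuous_on {a..b} f"
    and "\<And>x. x \<in> {a<..<b} \<Longrightarrow> (f has_real_derivative f' x) (at x)"
    and "a < \<xi>c" and "\<xi>c < c" and "c < b"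
    and "f' \<xi>c = (f c - f a) / (c - a)"
  shows "\<exists>\<xi>b \<in> {\<xi>c..<b}. f' \<xi>b = (f b - f a) / (b - a)"
proof (cases "f' \<xi>c = (f b - f a) / (b - a)")
  case True
  then show ?thesis using assms by auto
next
  case False
  define m where "m = (f b - f a) / (b - a)"
  define g where "g x = f x - f a - m * (x - a)" for x
  have "continuous_on {\<xi>c..b} g"
    unfolding g_def using assms by (auto intro!: continuous_intros intro: continuous_on_subset)
  moreover have "(g has_real_derivative f' x - m) (at x)" if "x \<in> {\<xi>c..<b}" for x
    unfolding g_def using assms that by (auto intro!: derivative_eq_intros)
  moreover have "0 < (f' \<xi>c - m) * (g c - g b)"
  proof -
    have "g b = 0" using assms by (simp add: g_def m_def)
    moreover have "g c = (c - a) * (f' \<xi>c - m)" using assms by (simp add: g_def field_simps)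
    ultimately have "(f' \<xi>c - m) * (g c - g b) = (c - a) * (f' \<xi>c - m)\<^sup>2"
      by (simp add: power2_eq_square)
    moreover have "f' \<xi>c \<noteq> m" using False by (simp add: m_def)
    ultimately show ?thesis using assms by simp
  qed
  ultimately obtain x where "x \<in> {\<xi>c<..<b}" "f' x - m = 0"
    using DERIV_zero_between[of \<xi>c b g "\<lambda>x. f' x - m" c] assms by fastforce
  then show ?thesis unfolding m_def by auto
qed

end
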